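(* The following weakening rules are admissible in $\mathsf{G}(\mathbf{KT}^+_D)$: for all finite multisets $\Gamma,\Delta$ of formulas, every finite multiset $\Sigma$ of outmost-boxed formulas, every formula $\alpha$ and every $G\in\mathsf{Grp}$, if $\vdash\Sigma\mid\Gamma\Rightarrow\Delta$ then $\vdash\Sigma\mid\Gamma\Rightarrow\Delta,\alpha$, $\vdash\Sigma\mid\alpha,\Gamma\Rightarrow\Delta$, and $\vdash\Sigma,D_G\alpha\mid\Gamma\Rightarrow\Delta$.
   Context: Language: fix a finite nonempty set $\mathsf{Agt}$ of agents and a countable set $\mathsf{Prop}$ of propositional variables; $\mathsf{Grp}$ is the set of nonempty subsets of $\mathsf{Agt}$. Formulas: $\alpha::=p\mid\bot\mid\alpha\wedge\alpha\mid\alpha\vee\alpha\mid\alpha\rightarrow\alpha\mid\neg\alpha\mid D_G\alpha$ ($p\in\mathsf{Prop}$, $G\in\mathsf{Grp}$). Outmost-boxed formula: one of the form $D_G\gamma$. Calculus $\mathsf{G}(\mathbf{KT}^+_D)$ ($\vdash$ denotes derivability: root of a finite tree built from initial sequents by the rules): a T-sequent $\Sigma\mid\Gamma\Rightarrow\Delta$ consists of finite multisets $\Gamma,\Delta$ of formulas and a finite multiset $\Sigma$ of outmost-boxed formulas. Initial sequents: $\Sigma\mid\Gamma,p\Rightarrow p,\Delta$ ($p\in\mathsf{Prop}$) and $\Sigma\mid\bot,\Gamma\Rightarrow\Delta$. Propositional rules (with $\Sigma$ unchanged): $(R\wedge)$ from $\Sigma\mid\Gamma\Rightarrow\Delta,\alpha_1$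 and $\Sigma\mid\Gamma\Rightarrow\Delta,\alpha_2$ infer $\Sigma\mid\Gamma\Rightarrow\Delta,\alpha_1\wedge\alpha_2$; $(L\wedge)$ from $\Sigma\mid\alpha_1,\alpha_2,\Gamma\Rightarrow\Delta$ infer $\Sigma\mid\alpha_1\wedge\alpha_2,\Gamma\Rightarrow\Delta$; $(R\vee)$ from $\Sigma\mid\Gamma\Rightarrow\Delta,\alpha_1,\alpha_2$ infer $\Sigma\mid\Gamma\Rightarrow\Delta,\alpha_1\vee\alpha_2$; $(L\vee)$ from $\Sigma\mid\alpha_1,\Gamma\Rightarrow\Delta$ and $\Sigma\mid\alpha_2,\Gamma\Rightarrow\Delta$ infer $\Sigma\mid\alpha_1\vee\alpha_2,\Gamma\Rightarrow\Delta$; $(R\rightarrow)$ from $\Sigma\mid\alpha_1,\Gamma\Rightarrow\Delta,\alpha_2$ infer $\Sigma\mid\Gamma\Rightarrow\Delta,\alpha_1\rightarrow\alpha_2$; $(L\rightarrow)$ from $\Sigma\mid\Gamma\Rightarrow\Delta,\alpha_1$ and $\Sigma\mid\alpha_2,\Gamma\Rightarrow\Delta$ infer $\Sigma\mid\alpha_1\rightarrow\alpha_2,\Gamma\Rightarrow\Delta$; $(R\neg)$ from $\Sigma\mid\alpha,\Gamma\Rightarrow\Delta$ infer $\Sigma\mid\Gamma\Rightarrow\Delta,\neg\alpha$; $(L\neg)$ from $\Sigma\mid\Gamma\Rightarrow\Delta,\alpha$ infer $\Sigma\mid\neg\alpha,\Gamma\Rightarrow\Delta$. Modal rules: $(D_K^+)$: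 from $\emptyset\mid\alpha_1,\dots,\alpha_n\Rightarrow\beta$ ($n\ge0$) infer $\Sigma,D_{G_1}\alpha_1,\dots,D_{G_n}\alpha_n\mid\Pi\Rightarrow D_G\beta,\Omega$, provided $G_i\subseteq G$ for all $i$, $\Sigma$ consists only of formulas $D_H\gamma$ with $H\not\subseteq G$, $\Pi$ only of propositional variables and $\bot$, and $\Omega$ only of propositional variables, $\bot$ and outmost-boxed formulas; $(D_T^+)$: from $D_G\alpha,\Sigma\mid\Gamma,\alpha\Rightarrow\Delta$ infer $\Sigma\mid\Gamma,D_G\alpha\Rightarrow\Delta$. *)

theory Defs
  imports Main "HOL-Library.Multiset"
begin

text \<open>Agents: a finite nonempty type 'a (types are nonempty). Propositional variables: type 'p
(countable). Groups: nonempty sets of agents.\<close>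

datatype ('a, 'p) fm =
    Atom 'p
  | Bot
  | And "('a, 'p) fm" "('a, 'p) fm"
  | Or "('a, 'p) fm" "('a, 'p) fm"
  | Imp "('a, 'p) fm" "('a, 'p) fm"
  | Neg "('a, 'p) fm"
  | Dbox "'a set" "('a, 'p) fm"

definition Grp :: "'a set set" where
  "Grp = {G. G \<noteq> {}}"

fun wff :: "('a, 'p) fm \<Rightarrow> bool" where
  "wff (Atom p) = True"
| "wff Bot = True"
| "wff (And a b) = (wff a \<and> wff b)"
| "wff (Or a b) = (wff a \<and> wff b)"
| "wff (Imp a b) = (wff a \<and> wff b)"
| "wff (Neg a) = wff a"
| "wff (Dbox G a) = (G \<in> Grp \<and> wff a)"

fun outmost_boxed :: "('a, 'p) fm \<Rightarrow> bool" where
  "outmost_boxed (Dbox G a) = True"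
| "outmost_boxed _ = False"

fun atom_or_bot :: "('a, 'p) fm \<Rightarrow> bool" where
  "atom_or_bot (Atom p) = True"
| "atom_or_bot Bot = True"
| "atom_or_bot _ = False"

fun box_group :: "('a, 'p) fm \<Rightarrow> 'a set" where
  "box_group (Dbox G a) = G"
| "box_group _ = {}"

definition T_sequent :: "('a, 'p) fm multiset \<Rightarrow> ('a, 'p) fm multiset \<Rightarrow> ('a, 'p) fm multiset \<Rightarrow> bool" where
  "T_sequent S \<Gamma> \<Delta> \<longleftrightarrow> (\<forall>x\<in>#S. outmost_boxed x \<and> wff x) \<and> (\<forall>x\<in>#\<Gamma>. wff x) \<and> (\<forall>x\<in>#\<Delta>. wff x)"

text \<open>Derivability in G(KT+_D): derives S Gamma Delta means  |- S | Gamma => Delta.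
In rule D_K, the boxed premises D_{G_i} alpha_i are given as a list of pairs (G_i, alpha_i).\<close>
inductive derives :: "('a, 'p) fm multiset \<Rightarrow> ('a, 'p) fm multiset \<Rightarrow> ('a, 'p) fm multiset \<Rightarrow> bool" where
  init_atom: "T_sequent S (add_mset (Atom p) \<Gamma>) (add_mset (Atom p) \<Delta>) \<Longrightarrow>
     derives S (add_mset (Atom p) \<Gamma>) (add_mset (Atom p) \<Delta>)"
| init_bot: "T_sequent S (add_mset Bot \<Gamma>) \<Delta> \<Longrightarrow> derives S (add_mset Bot \<Gamma>) \<Delta>"
| R_and: "derives S \<Gamma> (add_mset a1 \<Delta>) \<Longrightarrow> derives S \<Gamma> (add_mset a2 \<Delta>) \<Longrightarrow>
     derives S \<Gamma> (add_mset (And a1 a2) \<Delta>)"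
| L_and: "derives S (add_mset a1 (add_mset a2 \<Gamma>)) \<Delta> \<Longrightarrow> derives S (add_mset (And a1 a2) \<Gamma>) \<Delta>"
| R_or: "derives S \<Gamma> (add_mset a1 (add_mset a2 \<Delta>)) \<Longrightarrow> derives S \<Gamma> (add_mset (Or a1 a2) \<Delta>)"
| L_or: "derives S (add_mset a1 \<Gamma>) \<Delta> \<Longrightarrow> derives S (add_mset a2 \<Gamma>) \<Delta> \<Longrightarrow>
     derives S (add_mset (Or a1 a2) \<Gamma>) \<Delta>"
| R_imp: "derives S (add_mset a1 \<Gamma>) (add_mset a2 \<Delta>) \<Longrightarrow> derives S \<Gamma> (add_mset (Imp a1 a2) \<Delta>)"
| L_imp: "derives S \<Gamma> (add_mset a1 \<Delta>) \<Longrightarrow> derives S (add_mset a2 \<Gamma>) \<Delta> \<Longrightarrow>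
     derives S (add_mset (Imp a1 a2) \<Gamma>) \<Delta>"
| R_neg: "derives S (add_mset a \<Gamma>) \<Delta> \<Longrightarrow> derives S \<Gamma> (add_mset (Neg a) \<Delta>)"
| L_neg: "derives S \<Gamma> (add_mset a \<Delta>) \<Longrightarrow> derives S (add_mset (Neg a) \<Gamma>) \<Delta>"
| D_K: "derives {#} (mset (map snd bs)) {#b#} \<Longrightarrow>
     (\<forall>(Gi, ai) \<in> set bs. Gi \<subseteq> G) \<Longrightarrow>
     (\<forall>x\<in>#S. outmost_boxed x \<and> \<not> box_group x \<subseteq> G) \<Longrightarrow>
     (\<forall>x\<in>#\<Pi>. atom_or_bot x) \<Longrightarrow>
     (\<forall>x\<in>#\<Omega>. atom_or_bot x \<or> outmost_boxed x) \<Longrightarrow>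
     T_sequent (S + mset (map (\<lambda>(Gi, ai). Dbox Gi ai) bs)) \<Pi> (add_mset (Dbox G b) \<Omega>) \<Longrightarrow>
     derives (S + mset (map (\<lambda>(Gi, ai). Dbox Gi ai) bs)) \<Pi> (add_mset (Dbox G b) \<Omega>)"
| D_T: "derives (add_mset (Dbox G a) S) (add_mset a \<Gamma>) \<Delta> \<Longrightarrow>
     derives S (add_mset (Dbox G a) \<Gamma>) \<Delta>"

end

theory Submission
  imports Defs
begin

text \<open>Weakening by an atom, by \<open>\<bottom>\<close> or by a boxed formula on the right is pushed up through
  the derivation: rule \<open>D\<^sub>K\<close> tolerates exactly such formulas in its contexts \<open>\<Pi>\<close> and \<open>\<Omega>\<close>, and
  a boxed formula \<open>D\<^sub>H \<alpha>\<close> added to \<open>\<Sigma>\<close> either stays in \<open>\<Sigma>\<close> (if \<open>H \<not>\<subseteq> G\<close>) or is moved into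
  the premise of \<open>D\<^sub>K\<close>, which then has to be weakened on the left by \<open>\<alpha>\<close>. Every other formula
  is decomposed at the root of the derivation, by structural induction, into such weakenings
  followed by its introduction rule; a boxed formula on the left is introduced by \<open>D\<^sub>T\<close>.\<close>

lemma mset_eq_Dbox_pairs:
  assumes "\<forall>x\<in>#M. outmost_boxed x"
  obtains ps where "mset (map (\<lambda>(Gi, ai). Dbox Gi ai) ps) = M"
  using assms
proof (induction M arbitrary: thesis)
  case empty
  then show ?case by force
next
  case (add x M)
  obtain H a where "x = Dbox H a"
    using add.prems(2) by (cases x) auto
  moreover obtain ps where "mset (map (\<lambda>(Gi, ai). Dbox Gi ai) ps) = M"
    using add.IH add.prems(2) by auto
  ultimately show ?case
    using add.prems(1)[of "(H, a) # ps"] by simp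
qed

lemma T_sequent_union:
  "T_sequent S \<Gamma> \<Delta> \<Longrightarrow> T_sequent S' \<Gamma>' \<Delta>' \<Longrightarrow> T_sequent (S + S') (\<Gamma> + \<Gamma>') (\<Delta> + \<Delta>')"
  by (auto simp: T_sequent_def)

lemma derives_weaken_left_mset:
  assumes "\<And>a \<Gamma> \<Delta>. a \<in># A \<Longrightarrow> derives S \<Gamma> \<Delta> \<Longrightarrow> derives S (add_mset a \<Gamma>) \<Delta>"
    and "derives S \<Gamma> \<Delta>"
  shows "derives S (\<Gamma> + A) \<Delta>"
  using assms by (induction A arbitrary: \<Gamma> rule: multiset_induct) auto

lemma derives_weaken_shallow:
  assumes "derives S \<Gamma> \<Delta>" and "T_sequent S' \<Gamma>' \<Delta>'"
    and "\<forall>x\<in>#\<Gamma>'. atom_or_bot x" and "\<forall>x\<in>#\<Delta>'. atom_or_bot x \<or> outmost_boxed x"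
    and left_weaken_body:
      "\<And>H a \<Gamma> \<Delta>. Dbox H a \<in># S' \<Longrightarrow> derives {#} \<Gamma> \<Delta> \<Longrightarrow> derives {#} (add_mset a \<Gamma>) \<Delta>"
  shows "derives (S + S') (\<Gamma> + \<Gamma>') (\<Delta> + \<Delta>')"
  using assms(1)
proof (induction rule: derives.induct)
  case (init_atom S p \<Gamma> \<Delta>)
  then have "T_sequent (S + S') (add_mset (Atom p) (\<Gamma> + \<Gamma>')) (add_mset (Atom p) (\<Delta> + \<Delta>'))"
    using T_sequent_union[OF _ assms(2)] by fastforce
  then show ?case by (simp add: derives.init_atom)
next
  case (init_bot S \<Gamma> \<Delta>)
  then have "T_sequent (S + S') (add_mset Bot (\<Gamma> + \<Gamma>')) (\<Delta> + \<Delta>')"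
    using T_sequent_union[OF _ assms(2)] by fastforce
  then show ?case by (simp add: derives.init_bot)
next
  case (D_K bs b G S \<Pi> \<Omega>)
  let ?boxes = "\<lambda>ps. mset (map (\<lambda>(Gi, ai). Dbox Gi ai) ps)"
  define S'_in where "S'_in = filter_mset (\<lambda>x. box_group x \<subseteq> G) S'"
  define S'_out where "S'_out = filter_mset (\<lambda>x. \<not> box_group x \<subseteq> G) S'"
  have S'_boxed: "outmost_boxed x" if "x \<in># S'" for x
    using assms(2) that by (auto simp: T_sequent_def)
  then obtain ps where boxes_ps: "?boxes ps = S'_in"
    using mset_eq_Dbox_pairs[of S'_in] by (auto simp: S'_in_def)
  have ps_in_S': "Dbox Gi ai \<in># S'" and ps_group: "Gi \<subseteq> G" if "(Gi, ai) \<in> set ps" for Gi ai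
  proof -
    have "Dbox Gi ai \<in># S'_in"
      using that boxes_ps[symmetric] by force
    then show "Dbox Gi ai \<in># S'" and "Gi \<subseteq> G"
      by (simp_all add: S'_in_def)
  qed
  have premise: "derives {#} (mset (map snd (bs @ ps))) {#b#}"
  proof -
    have "derives {#} (mset (map snd bs) + mset (map snd ps)) {#b#}"
    proof (rule derives_weaken_left_mset[OF _ D_K.hyps(1)])
      show "derives {#} (add_mset a \<Gamma>) \<Delta>"
        if "a \<in># mset (map snd ps)" and "derives {#} \<Gamma> \<Delta>" for a \<Gamma> \<Delta>
        using that left_weaken_body ps_in_S' by force
    qed
    then show ?thesis by simp
  qed
  have split_S': "S' = S'_out + S'_in"
    by (simp add: S'_in_def S'_out_def add.commute)
  have context_eq: "S + ?boxes bs + S' = (S + S'_out) + ?boxes (bs @ ps)"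
    using boxes_ps split_S' by (simp add: ac_simps)
  have "derives ((S + S'_out) + ?boxes (bs @ ps)) (\<Pi> + \<Gamma>') (add_mset (Dbox G b) (\<Omega> + \<Delta>'))"
  proof (rule derives.D_K[OF premise])
    show "\<forall>(Gi, ai)\<in>set (bs @ ps). Gi \<subseteq> G"
      using D_K.hyps(2) ps_group by auto
    show "\<forall>x\<in>#S + S'_out. outmost_boxed x \<and> \<not> box_group x \<subseteq> G"
      using D_K.hyps(3) S'_boxed by (auto simp: S'_out_def)
    show "\<forall>x\<in>#\<Pi> + \<Gamma>'. atom_or_bot x"
      using D_K.hyps(4) assms(3) by auto
    show "\<forall>x\<in>#\<Omega> + \<Delta>'. atom_or_bot x \<or> outmost_boxed x"
      using D_K.hyps(5) assms(4) by auto
    show "T_sequent ((S + S'_out) + ?boxes (bs @ ps)) (\<Pi> + \<Gamma>') (add_mset (Dbox G b) (\<Omega> + \<Delta>'))"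
      using T_sequent_union[OF D_K.hyps(6) assms(2)] context_eq by (simp add: ac_simps)
  qed
  then show ?case using context_eq by (simp add: ac_simps)
qed (auto intro: derives.intros)

lemma derives_weaken_right_left:
  assumes "wff \<alpha>" and "derives S \<Gamma> \<Delta>"
  shows "derives S \<Gamma> (add_mset \<alpha> \<Delta>) \<and> derives S (add_mset \<alpha> \<Gamma>) \<Delta>"
  using assms
proof (induction \<alpha> arbitrary: S \<Gamma> \<Delta>)
  case (Atom p)
  then show ?case
    using derives_weaken_shallow[of S \<Gamma> \<Delta> "{#}" "{#}" "{#Atom p#}"]
      derives_weaken_shallow[of S \<Gamma> \<Delta> "{#}" "{#Atom p#}" "{#}"]
    by (simp add: T_sequent_def)
next
  case Bot
  then show ?case
    using derives_weaken_shallow[of S \<Gamma> \<Delta> "{#}" "{#}" "{#Bot#}"]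
      derives_weaken_shallow[of S \<Gamma> \<Delta> "{#}" "{#Bot#}" "{#}"]
    by (simp add: T_sequent_def)
next
  case (And a1 a2)
  then show ?case
    by (auto intro: derives.R_and derives.L_and)
next
  case (Or a1 a2)
  then show ?case
    by (auto intro: derives.R_or derives.L_or)
next
  case (Imp a1 a2)
  then show ?case
    by (auto intro: derives.R_imp derives.L_imp)
next
  case (Neg a)
  then show ?case
    by (auto intro: derives.R_neg derives.L_neg)
next
  case (Dbox K a)
  have right: "derives S \<Gamma> (add_mset (Dbox K a) \<Delta>)"
    using Dbox.prems derives_weaken_shallow[of S \<Gamma> \<Delta> "{#}" "{#}" "{#Dbox K a#}"]
    by (simp add: T_sequent_def)
  have "derives (add_mset (Dbox K a) S) \<Gamma> \<Delta>"
    using Dbox derives_weaken_shallow[of S \<Gamma> \<Delta> "{#Dbox K a#}" "{#}" "{#}"]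
    by (simp add: T_sequent_def)
  then have "derives (add_mset (Dbox K a) S) (add_mset a \<Gamma>) \<Delta>"
    using Dbox by simp
  then show ?case
    using right derives.D_T by blast
qed

lemma derives_weaken_box:
  assumes "wff \<alpha>" and "H \<in> Grp" and "derives S \<Gamma> \<Delta>"
  shows "derives (add_mset (Dbox H \<alpha>) S) \<Gamma> \<Delta>"
  using assms derives_weaken_right_left[OF assms(1)]
    derives_weaken_shallow[of S \<Gamma> \<Delta> "{#Dbox H \<alpha>#}" "{#}" "{#}"]
  by (simp add: T_sequent_def)

theorem proposition6p8:
  fixes S \<Gamma> \<Delta> :: "('a::finite, 'p) fm multiset" and \<alpha> :: "('a, 'p) fm" and G :: "'a set"
  assumes "T_sequent S \<Gamma> \<Delta>" and "wff \<alpha>" and "G \<in> Grp"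
    and "derives S \<Gamma> \<Delta>"
  shows "derives S \<Gamma> (add_mset \<alpha> \<Delta>) \<and>
         derives S (add_mset \<alpha> \<Gamma>) \<Delta> \<and>
         derives (add_mset (Dbox G \<alpha>) S) \<Gamma> \<Delta>"
  using derives_weaken_right_left[OF assms(2,4)] derives_weaken_box[OF assms(2,3,4)] by blast

end
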